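(* Suppose $K\in\mathbb{K}$, $K'=K-2\eta L^K$ and $$0<\eta\le\frac{1}{2\|R+B^T\mathcal{E}(P^K)B\|_{\max}}.$$ Then $$C(K')-C(K^* )\le\Big(1-\frac{2\mu\Lambda_{\min}(R)}{\|\mathbf{X}^{K^*}\|_{\max}}\eta\Big)\big(C(K)-C(K^* )\big).$$
   Context: Let $N_s\ge 1$, $\Omega=\{1,\dots,N_s\}$; tuples $V=(V_1,\dots,V_{N_s})$ of matrices are combined componentwise, $\|V\|_{\max}=\max_i\|V_i\|$ (spectral norm), $\Lambda_{\min}(V)=\min_i\sigma_{\min}(V_i)$. Markovian jump linear system: $x_{t+1}=A_{\omega(t)}x_t+B_{\omega(t)}u_t$, $A_i\in\mathbb{R}^{d\times d}$, $B_i\in\mathbb{R}^{d\times k}$; $\{\omega(t)\}$ is a time-homogeneous Markov chain on $\Omega$ with transition probabilities $p_{ij}$ and initial distribution $\pi$ with $\pi_i>0$; $x_0$ is random, independent of the chain, with $\mathbb{E}[x_0x_0^T]\succ0$. The system is mean-square stabilizable. $Q=(Q_i)\succ0$, $R=(R_i)\succ0$. For $K=(K_i)$, $K_i\in\mathbb{R}^{k\times d}$, $u_t=-K_{\omega(t)}x_t$ and $C(K)=\mathbb{E}[\sum_{t\ge0}x_t^TQ_{\omega(t)}x_t+u_t^TR_{\omega(t)}u_t]$. $\mathbb{K}$ is the set of $K$ making the closed loop $x_{t+1}=\Gamma_{\omega(t)}x_t$, $\Gamma_i=A_i-B_iK_i$, mean-square stable (equivalently $C(K)<\infty$). $K^*$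 is the optimal gain minimizing $C$ over $\mathbb{K}$. $\mathcal{E}_i(V)=\sum_jp_{ij}V_j$; $\mathcal{T}_j(V)=\sum_ip_{ij}\Gamma_iV_i\Gamma_i^T$. For $K\in\mathbb{K}$: $P^K$ solves $P_i^K=Q_i+K_i^TR_iK_i+\Gamma_i^T\mathcal{E}_i(P^K)\Gamma_i$; $L_i^K=(R_i+B_i^T\mathcal{E}_i(P^K)B_i)K_i-B_i^T\mathcal{E}_i(P^K)A_i$; $X_i(0)=\mathbb{E}[x_0x_0^T\mathbf{1}\{\omega(0)=i\}]$, $\mathbf{X}^K=\sum_{t\ge0}\mathcal{T}^t(X(0))$. $\mu=\min_i\pi_i\,\sigma_{\min}(\mathbb{E}[x_0x_0^T])$. *)

theory Defs
  imports "HOL-Analysis.Analysis" "HOL-Probability.Probability"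
begin

definition specnorm :: "real^'n^'m \<Rightarrow> real" where
  "specnorm M = onorm (\<lambda>x. M *v x)"

definition sigma_min :: "real^'n^'n \<Rightarrow> real" where
  "sigma_min M = Inf {norm (M *v x) | x. norm x = 1}"

definition posdef :: "real^'n^'n \<Rightarrow> bool" where
  "posdef M \<longleftrightarrow> transpose M = M \<and> (\<forall>x. x \<noteq> 0 \<longrightarrow> x \<bullet> (M *v x) > 0)"

definition max_norm :: "('m::finite \<Rightarrow> real^'n^'k) \<Rightarrow> real" where
  "max_norm V = Max (range (\<lambda>i. specnorm (V i)))"

definition Lambda_min :: "('m::finite \<Rightarrow> real^'n^'n) \<Rightarrow> real" where
  "Lambda_min V = Min (range (\<lambda>i. sigma_min (V i)))"

definition Gam :: "('m \<Rightarrow> real^'d^'d) \<Rightarrow> ('m \<Rightarrow> real^'k^'d) \<Rightarrow> ('m \<Rightarrow> real^'d^'k) \<Rightarrow> 'm \<Rightarrow> real^'d^'d" where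
  "Gam A B K i = A i - B i ** K i"

text \<open>State transition along a mode path w: \<Phi>_w(t) = \<Gamma>_{w(t-1)} \<dots> \<Gamma>_{w 0}, so x_t = \<Phi>_w(t) x_0.\<close>
fun Phi :: "('m \<Rightarrow> real^'d^'d) \<Rightarrow> (nat \<Rightarrow> 'm) \<Rightarrow> nat \<Rightarrow> real^'d^'d" where
  "Phi G w 0 = mat 1"
| "Phi G w (Suc t) = G (w t) ** Phi G w t"

definition paths :: "nat \<Rightarrow> (nat \<Rightarrow> 'm) set" where
  "paths t = {0..t} \<rightarrow>\<^sub>E UNIV"

definition path_trans :: "('m \<Rightarrow> 'm \<Rightarrow> real) \<Rightarrow> (nat \<Rightarrow> 'm) \<Rightarrow> nat \<Rightarrow> real" where
  "path_trans p w t = (\<Prod>s<t. p (w s) (w (Suc s)))"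

definition stochastic :: "('m::finite \<Rightarrow> 'm \<Rightarrow> real) \<Rightarrow> bool" where
  "stochastic p \<longleftrightarrow> (\<forall>i j. p i j \<ge> 0) \<and> (\<forall>i. (\<Sum>j\<in>UNIV. p i j) = 1)"

text \<open>Mean-square stability of the closed loop x_{t+1} = \<Gamma>_{\<omega>(t)} x_t:
  for every initial mode and every initial state, E |x_t|^2 \<rightarrow> 0.\<close>
definition mss :: "('m::finite \<Rightarrow> 'm \<Rightarrow> real) \<Rightarrow> ('m \<Rightarrow> real^'d^'d) \<Rightarrow> bool" where
  "mss p G \<longleftrightarrow> (\<forall>i0 (x::real^'d).
     (\<lambda>t. \<Sum>w\<in>{w\<in>paths t. w 0 = i0}. path_trans p w t * (norm (Phi G w t *v x))\<^sup>2)
       \<longlonglongrightarrow> 0)"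

definition stabK :: "('m::finite \<Rightarrow> 'm \<Rightarrow> real) \<Rightarrow> ('m \<Rightarrow> real^'d^'d) \<Rightarrow> ('m \<Rightarrow> real^'k^'d)
    \<Rightarrow> ('m \<Rightarrow> real^'d^'k) set" where
  "stabK p A B = {K. mss p (Gam A B K)}"

text \<open>Cost C(K) = E[\<Sum>_t x_t^T Q x_t + u_t^T R u_t] with u_t = -K x_t, where
  x_0 is a random vector on the probability space M, independent of the mode chain
  (initial distribution \<pi>, transitions p).  The expectation over the (finite) mode
  path is written out as a sum over paths weighted by their probabilities; the value is
  an extended real (possibly \<infinity>).\<close>
definition cost :: "'a measure \<Rightarrow> ('a \<Rightarrow> real^'d) \<Rightarrow> ('m::finite \<Rightarrow> real) \<Rightarrow> ('m \<Rightarrow> 'm \<Rightarrow> real)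
    \<Rightarrow> ('m \<Rightarrow> real^'d^'d) \<Rightarrow> ('m \<Rightarrow> real^'k^'d) \<Rightarrow> ('m \<Rightarrow> real^'d^'d) \<Rightarrow> ('m \<Rightarrow> real^'k^'k)
    \<Rightarrow> ('m \<Rightarrow> real^'d^'k) \<Rightarrow> ereal" where
  "cost M x0 \<pi> p A B Q R K =
    (\<Sum>t. ereal (\<Sum>w\<in>paths t. \<pi> (w 0) * path_trans p w t *
        (\<integral>\<omega>. (let x = Phi (Gam A B K) w t *v x0 \<omega>; u = - (K (w t) *v x)
               in x \<bullet> (Q (w t) *v x) + u \<bullet> (R (w t) *v u)) \<partial>M)))"

definition second_moment :: "'a measure \<Rightarrow> ('a \<Rightarrow> real^'d) \<Rightarrow> real^'d^'d" where
  "second_moment M x0 = (\<chi> i j. \<integral>\<omega>. x0 \<omega> $ i * x0 \<omega> $ j \<partial>M)"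

definition Eop :: "('m::finite \<Rightarrow> 'm \<Rightarrow> real) \<Rightarrow> ('m \<Rightarrow> real^'n^'n) \<Rightarrow> 'm \<Rightarrow> real^'n^'n" where
  "Eop p V i = (\<Sum>j\<in>UNIV. p i j *\<^sub>R V j)"

definition Top :: "('m::finite \<Rightarrow> 'm \<Rightarrow> real) \<Rightarrow> ('m \<Rightarrow> real^'d^'d) \<Rightarrow> ('m \<Rightarrow> real^'d^'d) \<Rightarrow> 'm \<Rightarrow> real^'d^'d" where
  "Top p G V j = (\<Sum>i\<in>UNIV. p i j *\<^sub>R (G i ** V i ** transpose (G i)))"

definition PK :: "('m::finite \<Rightarrow> 'm \<Rightarrow> real) \<Rightarrow> ('m \<Rightarrow> real^'d^'d) \<Rightarrow> ('m \<Rightarrow> real^'k^'d)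
    \<Rightarrow> ('m \<Rightarrow> real^'d^'d) \<Rightarrow> ('m \<Rightarrow> real^'k^'k) \<Rightarrow> ('m \<Rightarrow> real^'d^'k) \<Rightarrow> 'm \<Rightarrow> real^'d^'d" where
  "PK p A B Q R K = (THE P. \<forall>i. P i = Q i + transpose (K i) ** R i ** K i
       + transpose (Gam A B K i) ** Eop p P i ** Gam A B K i)"

definition LK :: "('m::finite \<Rightarrow> 'm \<Rightarrow> real) \<Rightarrow> ('m \<Rightarrow> real^'d^'d) \<Rightarrow> ('m \<Rightarrow> real^'k^'d)
    \<Rightarrow> ('m \<Rightarrow> real^'d^'d) \<Rightarrow> ('m \<Rightarrow> real^'k^'k) \<Rightarrow> ('m \<Rightarrow> real^'d^'k) \<Rightarrow> 'm \<Rightarrow> real^'d^'k" where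
  "LK p A B Q R K i = (let P = PK p A B Q R K in
      (R i + transpose (B i) ** Eop p P i ** B i) ** K i - transpose (B i) ** Eop p P i ** A i)"

text \<open>X_i(0) = E[x_0 x_0^T 1{\<omega>(0)=i}] = \<pi>_i E[x_0 x_0^T] (independence).\<close>
definition X0 :: "'a measure \<Rightarrow> ('a \<Rightarrow> real^'d) \<Rightarrow> ('m \<Rightarrow> real) \<Rightarrow> 'm \<Rightarrow> real^'d^'d" where
  "X0 M x0 \<pi> i = \<pi> i *\<^sub>R second_moment M x0"

definition XK :: "'a measure \<Rightarrow> ('a \<Rightarrow> real^'d) \<Rightarrow> ('m::finite \<Rightarrow> real) \<Rightarrow> ('m \<Rightarrow> 'm \<Rightarrow> real)
    \<Rightarrow> ('m \<Rightarrow> real^'d^'d) \<Rightarrow> ('m \<Rightarrow> real^'k^'d) \<Rightarrow> ('m \<Rightarrow> real^'d^'k) \<Rightarrow> 'm \<Rightarrow> real^'d^'d" where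
  "XK M x0 \<pi> p A B K i = (\<Sum>t. ((Top p (Gam A B K) ^^ t) (X0 M x0 \<pi>)) i)"

definition mu :: "'a measure \<Rightarrow> ('a \<Rightarrow> real^'d) \<Rightarrow> ('m::finite \<Rightarrow> real) \<Rightarrow> real" where
  "mu M x0 \<pi> = Min (range \<pi>) * sigma_min (second_moment M x0)"

end

theory Submission
  imports Defs
begin

(* Write L_K for the operator V |-> (Gamma_i^T E_i(V) Gamma_i)_i.  For a mean-square stabilizing
   gain K, P^K is the unique solution of P = Q + K^T R K + L_K P, namely the sum of the series
   sum_t L_K^t (Q + K^T R K), and C(K) = E[x_0^T P^K_omega(0) x_0].  For another stabilizing gain
   K', P^K' - P^K = sum_t L_K'^t Y, where the residual Y of P^K in the equation of K' satisfies
   x^T Y_i x = d^T (R_i + B_i^T E_i(P^K) B_i) d - 2 d^T L^K_i x with d = (K_i - K'_i) x.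
   For the gradient step K' = K - 2 eta L^K the residual is at most -2 eta |L^K x|^2: this makes K'
   stabilizing and lowers the cost by at least 2 eta mu sum_i |L^K_i|_F^2.  For K' = Kopt,
   completing the square bounds the residual below by -|L^K x|^2 / Lambda_min R; summing along the
   closed loop of Kopt, whose accumulated state covariance is X^Kopt, bounds C(K) - C(Kopt) by
   |X^Kopt|_max sum_i |L^K_i|_F^2 / Lambda_min R.  The two bounds combine to the linear rate. *)

section \<open>Bilinear forms of matrices\<close>

definition bilin :: "real^'n^'n \<Rightarrow> real^'n \<Rightarrow> real^'n \<Rightarrow> real" where
  "bilin M u v = u \<bullet> (M *v v)"

lemma bilin_entries: "bilin M u v = (\<Sum>a\<in>UNIV. \<Sum>b\<in>UNIV. u$a * M$a$b * v$b)"
  by (simp add: bilin_def inner_vec_def matrix_vector_mult_def sum_distrib_left mult_ac)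

lemma bilin_add: "bilin (M + N) u v = bilin M u v + bilin N u v"
  by (simp add: bilin_def matrix_vector_mult_add_rdistrib inner_add_right)

lemma bilin_diff: "bilin (M - N) u v = bilin M u v - bilin N u v"
  by (simp add: bilin_def matrix_vector_mult_diff_rdistrib inner_diff_right)

lemma bilin_scaleR: "bilin (c *\<^sub>R M) u v = c * bilin M u v"
  by (simp add: bilin_entries sum_distrib_left mult_ac)

lemma bilin_uminus: "bilin (- M) u v = - bilin M u v"
  by (simp add: bilin_entries sum_negf)

lemma bilin_zero [simp]: "bilin 0 u v = 0"
  by (simp add: bilin_def)

lemma bilin_sum: "bilin (\<Sum>j\<in>S. f j) u v = (\<Sum>j\<in>S. bilin (f j) u v)"
  by (induction S rule: infinite_finite_induct) (auto simp: bilin_add)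

lemma bilin_mat_1: "bilin (mat 1) u v = u \<bullet> v"
  by (simp add: bilin_def)

lemma bilin_add_left: "bilin M (a + b) c = bilin M a c + bilin M b c"
  by (simp add: bilin_def inner_add_left)

lemma bilin_add_right: "bilin M a (b + c) = bilin M a b + bilin M a c"
  by (simp add: bilin_def matrix_vector_right_distrib inner_add_right)

lemma bilin_diff_left: "bilin M (a - b) c = bilin M a c - bilin M b c"
  by (simp add: bilin_def inner_diff_left)

lemma bilin_diff_right: "bilin M a (b - c) = bilin M a b - bilin M a c"
  by (simp add: bilin_def matrix_vector_mult_diff_distrib inner_diff_right)

lemma bilin_scaleR_left: "bilin M (r *\<^sub>R a) c = r * bilin M a c"
  by (simp add: bilin_def)

lemma bilin_scaleR_right: "bilin M a (r *\<^sub>R c) = r * bilin M a c"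
  by (simp add: bilin_def matrix_vector_mult_scaleR)

lemma inner_transpose_right: "(u::real^'n) \<bullet> (transpose G *v z) = (G *v u) \<bullet> z"
  by (metis dot_lmul_matrix inner_commute transpose_matrix_vector)

lemma bilin_congruence: "bilin (transpose G ** V ** G) u v = bilin V (G *v u) (G *v v)"
  by (simp only: bilin_def matrix_vector_mul_assoc[symmetric] inner_transpose_right)

lemma bilin_gram: "bilin (transpose L ** L) x x = (norm (L *v x))\<^sup>2"
  using bilin_congruence[of L "mat 1" x x] by (simp add: bilin_mat_1 power2_norm_eq_inner)

lemma bilin_transpose: "bilin (transpose M) u v = bilin M v u"
  by (simp add: bilin_def) (metis dot_lmul_matrix inner_commute)

lemma transpose_add: "transpose (X + Y) = transpose X + transpose (Y::real^'n^'n)"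
  by (simp add: transpose_def vec_eq_iff)

lemma bilin_commute: "transpose M = M \<Longrightarrow> bilin M u v = bilin M v u"
  by (metis bilin_transpose)

lemma bilin_axis: "bilin M (axis a 1) (axis b 1) = M$a$b"
proof -
  have "M *v axis b 1 = column b M"
    by (simp add: matrix_vector_mult_def column_def axis_def if_distrib cong: if_cong)
  then show ?thesis by (simp add: bilin_def inner_axis' column_def)
qed

lemma bilin_eqI: "(\<And>u v. bilin M u v = bilin N u v) \<Longrightarrow> M = N"
  by (metis bilin_axis vec_eq_iff)

lemma abs_bilin_le: "\<bar>bilin M u v\<bar> \<le> specnorm M * norm u * norm v"
proof -
  have "\<bar>bilin M u v\<bar> \<le> norm u * norm (M *v v)"
    unfolding bilin_def by (rule Cauchy_Schwarz_ineq2)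
  also have "\<dots> \<le> norm u * (specnorm M * norm v)"
    unfolding specnorm_def by (intro mult_left_mono onorm) auto
  finally show ?thesis by (simp add: mult_ac)
qed

lemma specnorm_nonneg: "0 \<le> specnorm M"
  unfolding specnorm_def by (rule onorm_pos_le) (simp add: matrix_vector_mul_bounded_linear)

lemma bilin_le_specnorm: "bilin M u u \<le> specnorm M * (norm u)\<^sup>2"
  using abs_bilin_le[of M u u] by (simp add: power2_eq_square mult_ac)

section \<open>Positive definite matrices and singular values\<close>

lemma posdef_symmetric: "posdef M \<Longrightarrow> transpose M = M"
  by (simp add: posdef_def)

lemma posdef_bilin_nonneg: "posdef M \<Longrightarrow> 0 \<le> bilin M y y"
  unfolding posdef_def bilin_def by (cases "y = 0") (auto intro: less_imp_le)

lemma exists_unit_vector: "\<exists>x::real^'n. norm x = 1"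
  by (rule exI[of _ "axis undefined 1"]) simp

lemma sigma_min_nonneg: "0 \<le> sigma_min (M::real^'n^'n)"
  unfolding sigma_min_def using exists_unit_vector by (intro cInf_greatest) auto

lemma sigma_min_le_norm: "norm u = 1 \<Longrightarrow> sigma_min (M::real^'n^'n) \<le> norm (M *v u)"
  unfolding sigma_min_def by (rule cInf_lower) (auto intro: bdd_belowI[of _ 0])

text \<open>If \<open>N u \<noteq> 0\<close>, the form is negative somewhere on the line through \<open>u\<close> in direction \<open>N u\<close>.\<close>

lemma psd_bilin_eq_0_imp_kernel:
  fixes N :: "real^'n^'n"
  assumes "transpose N = N" and psd: "\<And>y. 0 \<le> bilin N y y" and "bilin N u u = 0"
  shows "N *v u = 0"
proof (rule ccontr)
  assume "N *v u \<noteq> 0"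
  define v where "v = N *v u"
  define a where "a = bilin N v u"
  define c where "c = bilin N v v"
  define t where "t = - a / (c + 1)"
  have "a > 0" and "c \<ge> 0"
    using \<open>N *v u \<noteq> 0\<close> psd by (simp_all add: a_def c_def v_def bilin_def)
  have "bilin N (u + t *\<^sub>R v) (u + t *\<^sub>R v) = t * (2 * a + t * c)"
    using assms(3) bilin_commute[OF assms(1), of u v]
    by (simp add: bilin_add_left bilin_add_right bilin_scaleR_left bilin_scaleR_right a_def c_def
        algebra_simps)
  moreover have "t < 0" and "- a \<le> t * c"
    using \<open>a > 0\<close> \<open>c \<ge> 0\<close> by (simp_all add: t_def divide_neg_pos field_simps)
  then have "t * (2 * a + t * c) < 0"
    using \<open>a > 0\<close> by (intro mult_neg_pos) auto
  ultimately show False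
    using psd[of "u + t *\<^sub>R v"] by linarith
qed

text \<open>Rayleigh bound: the minimum \<open>l\<close> of the form on the unit sphere is attained at an
  eigenvector, so \<open>sigma_min M \<le> l\<close>.\<close>

lemma sigma_min_mult_le_bilin:
  fixes M :: "real^'n^'n"
  assumes sym: "transpose M = M" and psd: "\<And>y. 0 \<le> bilin M y y"
  shows "sigma_min M * (norm x)\<^sup>2 \<le> bilin M x x"
proof -
  have cont: "continuous_on (sphere 0 1) (\<lambda>x::real^'n. bilin M x x)"
    unfolding bilin_def by (intro continuous_intros linear_continuous_on matrix_vector_mul_bounded_linear)
  obtain u where u: "norm u = 1" and u_min: "\<And>y. norm y = 1 \<Longrightarrow> bilin M u u \<le> bilin M y y"
    using continuous_attains_inf[OF compact_sphere _ cont] exists_unit_vector by (auto simp: sphere_def)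
  define l where "l = bilin M u u"
  have lower: "l * (norm y)\<^sup>2 \<le> bilin M y y" for y
  proof (cases "y = 0")
    case False
    have "l \<le> bilin M ((1 / norm y) *\<^sub>R y) ((1 / norm y) *\<^sub>R y)"
      unfolding l_def using False by (intro u_min) simp
    then show ?thesis
      using False by (simp add: bilin_scaleR_left bilin_scaleR_right power2_eq_square field_simps)
  qed (simp add: bilin_def)
  have "(M - l *\<^sub>R mat 1) *v u = 0"
  proof (rule psd_bilin_eq_0_imp_kernel)
    show "transpose (M - l *\<^sub>R mat 1) = M - l *\<^sub>R mat 1"
      using sym by (simp add: transpose_def vec_eq_iff mat_def)
    show "0 \<le> bilin (M - l *\<^sub>R mat 1) y y" for y
      using lower[of y] by (simp add: bilin_diff bilin_scaleR bilin_mat_1 power2_norm_eq_inner)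
    show "bilin (M - l *\<^sub>R mat 1) u u = 0"
      using u by (simp add: bilin_diff bilin_scaleR bilin_mat_1 l_def power2_norm_eq_inner[symmetric])
  qed
  then have "M *v u = l *\<^sub>R u"
    by (simp add: matrix_vector_mult_diff_rdistrib scaleR_matrix_vector_assoc[symmetric])
  then have "sigma_min M \<le> l"
    using sigma_min_le_norm[OF u, of M] u psd[of u] by (simp add: l_def)
  then have "sigma_min M * (norm x)\<^sup>2 \<le> l * (norm x)\<^sup>2"
    by (simp add: mult_right_mono)
  also have "\<dots> \<le> bilin M x x"
    by (rule lower)
  finally show ?thesis .
qed

lemma sigma_min_pos:
  fixes M :: "real^'n^'n"
  assumes "posdef M"
  shows "0 < sigma_min M"
proof -
  have cont: "continuous_on (sphere 0 1) (\<lambda>x::real^'n. norm (M *v x))"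
    by (intro continuous_intros linear_continuous_on matrix_vector_mul_bounded_linear)
  obtain u where u: "norm u = 1" and u_min: "\<And>y. norm y = 1 \<Longrightarrow> norm (M *v u) \<le> norm (M *v y)"
    using continuous_attains_inf[OF compact_sphere _ cont] exists_unit_vector by (auto simp: sphere_def)
  have "sigma_min M = norm (M *v u)"
    unfolding sigma_min_def using u u_min by (intro cInf_eq_minimum) auto
  moreover have "M *v u \<noteq> 0"
    using assms u unfolding posdef_def by (metis inner_zero_right less_irrefl norm_zero zero_neq_one)
  ultimately show ?thesis
    by simp
qed

lemma specnorm_le_max_norm: "specnorm (V i) \<le> max_norm V"
  unfolding max_norm_def by (rule Max_ge) auto

lemma Lambda_min_le_sigma_min: "Lambda_min V \<le> sigma_min (V i)"
  unfolding Lambda_min_def by (rule Min_le) auto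

lemma Lambda_min_pos: "(\<And>i. posdef (V i)) \<Longrightarrow> 0 < Lambda_min V"
  unfolding Lambda_min_def by (subst Min_gr_iff) (auto intro: sigma_min_pos)

lemma Lambda_min_mult_le_bilin:
  assumes "\<And>i. posdef (V i)"
  shows "Lambda_min V * (norm x)\<^sup>2 \<le> bilin (V i) x x"
proof -
  have "Lambda_min V * (norm x)\<^sup>2 \<le> sigma_min (V i) * (norm x)\<^sup>2"
    by (intro mult_right_mono Lambda_min_le_sigma_min) simp
  also have "\<dots> \<le> bilin (V i) x x"
    using assms by (intro sigma_min_mult_le_bilin posdef_symmetric posdef_bilin_nonneg)
  finally show ?thesis .
qed

lemma max_norm_nonneg: "0 \<le> max_norm V"
  using specnorm_nonneg specnorm_le_max_norm order_trans by blast

lemma power2_norm_matrix: "(norm (L::real^'n^'k))\<^sup>2 = (\<Sum>r\<in>UNIV. (norm (L$r))\<^sup>2)"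
  by (simp add: power2_norm_eq_inner inner_vec_def)

section \<open>The Lyapunov operator and mean-square stability\<close>

text \<open>The adjoint of \<open>Top\<close> under the pairing \<open>\<Sum>\<^sub>i frob_inner (X i) (V i)\<close> defined below.\<close>

definition lyap_op :: "('m::finite \<Rightarrow> 'm \<Rightarrow> real) \<Rightarrow> ('m \<Rightarrow> real^'d^'d) \<Rightarrow> ('m \<Rightarrow> real^'d^'d)
    \<Rightarrow> 'm \<Rightarrow> real^'d^'d" where
  "lyap_op p G V i = transpose (G i) ** Eop p V i ** G i"

lemma bilin_Eop: "bilin (Eop p V i) u v = (\<Sum>j\<in>UNIV. p i j * bilin (V j) u v)"
  by (simp add: Eop_def bilin_sum bilin_scaleR)

lemma bilin_lyap_op: "bilin (lyap_op p G V i) u v = (\<Sum>j\<in>UNIV. p i j * bilin (V j) (G i *v u) (G i *v v))"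
  by (simp add: lyap_op_def bilin_congruence bilin_Eop)

lemma lyap_op_eq_sum: "lyap_op p G V i = (\<Sum>j\<in>UNIV. p i j *\<^sub>R (transpose (G i) ** V j ** G i))"
  by (rule bilin_eqI) (simp add: bilin_lyap_op bilin_sum bilin_scaleR bilin_congruence)

lemma lyap_op_add: "lyap_op p G (\<lambda>j. V j + V' j) = (\<lambda>i. lyap_op p G V i + lyap_op p G V' i)"
  by (intro ext bilin_eqI) (simp add: bilin_lyap_op bilin_add distrib_left sum.distrib)

lemma lyap_op_diff: "lyap_op p G (\<lambda>j. V j - V' j) = (\<lambda>i. lyap_op p G V i - lyap_op p G V' i)"
  by (intro ext bilin_eqI) (simp add: bilin_lyap_op bilin_diff right_diff_distrib sum_subtractf)

lemma lyap_op_scaleR: "lyap_op p G (\<lambda>j. c *\<^sub>R V j) = (\<lambda>i. c *\<^sub>R lyap_op p G V i)"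
  by (intro ext bilin_eqI) (simp add: bilin_lyap_op bilin_scaleR sum_distrib_left mult_ac)

lemma lyap_op_pow_add:
  "(lyap_op p G ^^ n) (\<lambda>j. V j + V' j) = (\<lambda>i. (lyap_op p G ^^ n) V i + (lyap_op p G ^^ n) V' i)"
  by (induction n) (simp_all add: lyap_op_add)

lemma lyap_op_pow_diff:
  "(lyap_op p G ^^ n) (\<lambda>j. V j - V' j) = (\<lambda>i. (lyap_op p G ^^ n) V i - (lyap_op p G ^^ n) V' i)"
  by (induction n) (simp_all add: lyap_op_diff)

lemma lyap_op_pow_scaleR:
  "(lyap_op p G ^^ n) (\<lambda>j. c *\<^sub>R V j) = (\<lambda>i. c *\<^sub>R (lyap_op p G ^^ n) V i)"
  by (induction n) (simp_all add: lyap_op_scaleR)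

lemma lyap_op_pow_zero [simp]: "(lyap_op p G ^^ n) (\<lambda>_. 0) = (\<lambda>_. 0)"
  using lyap_op_pow_scaleR[where c=0 and V="\<lambda>_. 0"] by simp

lemma lyap_op_pow_mono:
  assumes "\<forall>i j. 0 \<le> p i j" and "\<And>j y. bilin (V j) y y \<le> bilin (V' j) y y"
  shows "bilin ((lyap_op p G ^^ n) V i) x x \<le> bilin ((lyap_op p G ^^ n) V' i) x x"
proof (induction n arbitrary: i x)
  case 0
  show ?case using assms(2) by simp
next
  case (Suc n)
  show ?case
    using Suc.IH assms(1) by (simp add: bilin_lyap_op sum_mono mult_left_mono)
qed

lemma lyap_op_pow_nonneg:
  assumes "\<forall>i j. 0 \<le> p i j" and "\<And>j y. 0 \<le> bilin (V j) y y"
  shows "0 \<le> bilin ((lyap_op p G ^^ n) V i) x x"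
  using lyap_op_pow_mono[OF assms(1), where V="\<lambda>_. 0" and V'=V] assms(2) by simp

lemma transpose_lyap_op: "transpose (lyap_op p G P i) = lyap_op p G (\<lambda>j. transpose (P j)) i"
  by (rule bilin_eqI) (simp add: bilin_transpose bilin_lyap_op)

lemma finite_paths: "finite (paths t :: (nat \<Rightarrow> 'm::finite) set)"
  unfolding paths_def by (rule finite_PiE) auto

lemma sum_paths_Suc:
  "(\<Sum>w\<in>paths (Suc t). f w) = (\<Sum>w\<in>paths t. \<Sum>j\<in>(UNIV::'m::finite set). f (w(Suc t := j)))"
proof -
  have paths_eq: "paths (Suc t) = (\<lambda>(y, g). g(Suc t := y)) ` ((UNIV::'m set) \<times> paths t)"
    unfolding paths_def by (metis PiE_insert_eq atLeast0_atMost_Suc)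
  have "inj_on (\<lambda>(y, g). g(Suc t := y)) ((UNIV::'m set) \<times> paths t)"
    unfolding paths_def by (rule inj_combinator) auto
  then have "(\<Sum>w\<in>paths (Suc t). f w) = (\<Sum>(y, g)\<in>(UNIV::'m set) \<times> paths t. f (g(Suc t := y)))"
    unfolding paths_eq by (subst sum.reindex) (simp_all add: case_prod_beta')
  also have "\<dots> = (\<Sum>g\<in>paths t. \<Sum>y\<in>(UNIV::'m set). f (g(Suc t := y)))"
    by (subst sum.cartesian_product[symmetric]) (rule sum.swap)
  finally show ?thesis .
qed

lemma sum_paths_0:
  "(\<Sum>w\<in>paths 0. f w) = (\<Sum>j\<in>(UNIV::'m::finite set). f ((\<lambda>_. undefined)(0 := j)))"
proof -
  have paths_eq: "paths 0 = (\<lambda>(y, g). g(0 := y)) ` ((UNIV::'m set) \<times> Pi\<^sub>E {} (\<lambda>_. UNIV))"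
    unfolding paths_def by (metis PiE_insert_eq atLeastAtMost_singleton)
  have "inj_on (\<lambda>(y, g). g(0 := y)) ((UNIV::'m set) \<times> Pi\<^sub>E {} (\<lambda>_. UNIV))"
    by (rule inj_combinator) auto
  then have "(\<Sum>w\<in>paths 0. f w) = (\<Sum>(y, g)\<in>(UNIV::'m set) \<times> Pi\<^sub>E {} (\<lambda>_. UNIV). f (g(0 := y)))"
    unfolding paths_eq by (subst sum.reindex) (simp_all add: case_prod_beta')
  then show ?thesis by (simp add: sum.cartesian_product[symmetric] fun_upd_def)
qed

lemma path_trans_fun_upd_Suc:
  "path_trans p (w(Suc t := j)) (Suc t) = path_trans p w t * p (w t) j"
proof -
  have "(\<Prod>s<t. p ((w(Suc t := j)) s) ((w(Suc t := j)) (Suc s))) = (\<Prod>s<t. p (w s) (w (Suc s)))"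
    by (rule prod.cong) auto
  then show ?thesis by (simp add: path_trans_def)
qed

lemma Phi_fun_upd: "t \<le> n \<Longrightarrow> Phi G (w(n := j)) t = Phi G w t"
  by (induction t) auto

text \<open>The weight \<open>c\<close> of the initial mode is the initial distribution in the cost and an
  indicator in the definition of \<open>mss\<close>.\<close>

lemma sum_paths_eq_lyap_op_pow:
  "(\<Sum>w\<in>paths t. c (w 0) * path_trans p w t * bilin (V (w t)) (Phi G w t *v u) (Phi G w t *v v))
   = (\<Sum>i\<in>(UNIV::'m::finite set). c i * bilin ((lyap_op p G ^^ t) V i) u v)"
proof (induction t arbitrary: V)
  case 0
  show ?case by (simp add: sum_paths_0 path_trans_def)
next
  case (Suc t)
  have "(\<Sum>w\<in>paths (Suc t). c (w 0) * path_trans p w (Suc t) *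
          bilin (V (w (Suc t))) (Phi G w (Suc t) *v u) (Phi G w (Suc t) *v v))
      = (\<Sum>w\<in>paths t. c (w 0) * path_trans p w t *
          bilin (lyap_op p G V (w t)) (Phi G w t *v u) (Phi G w t *v v))"
    by (simp add: sum_paths_Suc path_trans_fun_upd_Suc Phi_fun_upd matrix_vector_mul_assoc
        bilin_lyap_op sum_distrib_left mult_ac)
  also have "\<dots> = (\<Sum>i\<in>UNIV. c i * bilin ((lyap_op p G ^^ t) (lyap_op p G V) i) u v)"
    by (rule Suc.IH)
  finally show ?case by (simp add: funpow_Suc_right del: funpow.simps)
qed

lemma mss_iff_lyap_op_pow:
  fixes p :: "'m::finite \<Rightarrow> 'm \<Rightarrow> real" and G :: "'m \<Rightarrow> real^'d^'d"
  shows "mss p G \<longleftrightarrow> (\<forall>i x. (\<lambda>t. bilin ((lyap_op p G ^^ t) (\<lambda>_. mat 1) i) x x) \<longlonglongrightarrow> 0)"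
proof -
  have "(\<Sum>w\<in>{w\<in>paths t. w 0 = i}. path_trans p w t * (norm (Phi G w t *v x))\<^sup>2)
      = bilin ((lyap_op p G ^^ t) (\<lambda>_. mat 1) i) x x" for t i and x :: "real^'d"
    using sum_paths_eq_lyap_op_pow[where c="\<lambda>j. if j = i then 1 else 0" and V="\<lambda>_. mat 1"]
    by (simp add: sum.inter_filter[OF finite_paths] bilin_mat_1 power2_norm_eq_inner
        if_distrib if_distribR cong: if_cong)
  then show ?thesis
    unfolding mss_def by simp
qed

text \<open>Positivity of \<open>lyap_op\<close> propagates \<open>|u\<^sup>T V v| \<le> C/2 (|u|\<^sup>2 + |v|\<^sup>2)\<close> through the
  iterates, so mean-square stability controls all of them.\<close>

lemma abs_bilin_lyap_op_pow_le:
  assumes p: "\<forall>i j. 0 \<le> p i j" and C: "\<And>j. specnorm (V j) \<le> C"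
  shows "\<bar>bilin ((lyap_op p G ^^ n) V i) u v\<bar>
    \<le> C / 2 * (bilin ((lyap_op p G ^^ n) (\<lambda>_. mat 1) i) u u + bilin ((lyap_op p G ^^ n) (\<lambda>_. mat 1) i) v v)"
proof (induction n arbitrary: i u v)
  case 0
  have "0 \<le> C"
    using C[of i] specnorm_nonneg[of "V i"] by linarith
  have "\<bar>bilin (V i) u v\<bar> \<le> C * (norm u * norm v)"
    using abs_bilin_le[of "V i" u v] mult_right_mono[OF C[of i], of "norm u * norm v"] by (simp add: mult_ac)
  also have "\<dots> \<le> C * (((norm u)\<^sup>2 + (norm v)\<^sup>2) / 2)"
    using sum_squares_bound[of "norm u" "norm v"] \<open>0 \<le> C\<close> by (intro mult_left_mono) auto
  finally show ?case by (simp add: bilin_mat_1 power2_norm_eq_inner)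
next
  case (Suc n)
  let ?I = "(lyap_op p G ^^ n) (\<lambda>_. mat 1)"
  have "\<bar>bilin ((lyap_op p G ^^ Suc n) V i) u v\<bar>
      \<le> (\<Sum>j\<in>UNIV. p i j * \<bar>bilin ((lyap_op p G ^^ n) V j) (G i *v u) (G i *v v)\<bar>)"
    using p by (simp add: bilin_lyap_op abs_mult order_trans[OF sum_abs])
  also have "\<dots> \<le> (\<Sum>j\<in>UNIV. p i j * (C / 2 *
      (bilin (?I j) (G i *v u) (G i *v u) + bilin (?I j) (G i *v v) (G i *v v))))"
    using p by (intro sum_mono mult_left_mono Suc.IH) auto
  also have "\<dots> = C / 2 * (bilin ((lyap_op p G ^^ Suc n) (\<lambda>_. mat 1) i) u u
      + bilin ((lyap_op p G ^^ Suc n) (\<lambda>_. mat 1) i) v v)"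
    by (simp add: bilin_lyap_op sum_distrib_left distrib_left sum.distrib mult_ac)
  finally show ?case .
qed

lemma lyap_op_pow_tendsto_0:
  assumes "mss p G" and p: "\<forall>i j. 0 \<le> p i j"
  shows "(\<lambda>t. bilin ((lyap_op p G ^^ t) V i) u v) \<longlonglongrightarrow> 0"
proof (rule Lim_null_comparison)
  define C where "C = (\<Sum>j\<in>UNIV. specnorm (V j))"
  have C_ge: "specnorm (V j) \<le> C" for j
    unfolding C_def by (rule member_le_sum) (auto intro: specnorm_nonneg)
  show "\<forall>\<^sub>F t in sequentially. norm (bilin ((lyap_op p G ^^ t) V i) u v)
      \<le> C / 2 * (bilin ((lyap_op p G ^^ t) (\<lambda>_. mat 1) i) u u + bilin ((lyap_op p G ^^ t) (\<lambda>_. mat 1) i) v v)"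
    by (intro always_eventually allI) (use abs_bilin_lyap_op_pow_le[OF p C_ge] in simp)
  have "(\<lambda>t. bilin ((lyap_op p G ^^ t) (\<lambda>_. mat 1) i) u u
      + bilin ((lyap_op p G ^^ t) (\<lambda>_. mat 1) i) v v) \<longlonglongrightarrow> 0"
    using assms(1) unfolding mss_iff_lyap_op_pow by (simp add: tendsto_add_zero)
  then show "(\<lambda>t. C / 2 * (bilin ((lyap_op p G ^^ t) (\<lambda>_. mat 1) i) u u
      + bilin ((lyap_op p G ^^ t) (\<lambda>_. mat 1) i) v v)) \<longlonglongrightarrow> 0"
    by (rule tendsto_mult_right_zero)
qed

section \<open>Coupled Lyapunov equations\<close>

lemma lyap_eq_sub:
  assumes "\<And>i. P' i = W' i + lyap_op p G P' i"
  shows "P' i - P i = (W' i + lyap_op p G P i - P i) + lyap_op p G (\<lambda>j. P' j - P j) i"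
  unfolding lyap_op_diff by (subst (1) assms) (simp add: algebra_simps)

lemma lyap_fixpoint_eq_0:
  assumes "mss p G" and "\<forall>i j. 0 \<le> p i j" and D: "\<And>i. D i = lyap_op p G D i"
  shows "D = (\<lambda>i. 0)"
proof (intro ext bilin_eqI)
  fix i u v
  have "lyap_op p G D = D"
    by (rule ext) (rule D[symmetric])
  then have "(lyap_op p G ^^ t) D = D" for t
    by (induction t) simp_all
  then have "(\<lambda>t. bilin (D i) u v) \<longlonglongrightarrow> 0"
    using lyap_op_pow_tendsto_0[OF assms(1,2), where V=D] by simp
  then show "bilin (D i) u v = bilin 0 u v"
    by (simp add: LIMSEQ_const_iff)
qed

lemma lyap_eq_unique:
  assumes "mss p G" and "\<forall>i j. 0 \<le> p i j"
    and "\<And>i. P i = W i + lyap_op p G P i" and "\<And>i. P' i = W i + lyap_op p G P' i"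
  shows "P' = P"
proof -
  have "P' i - P i = lyap_op p G (\<lambda>j. P' j - P j) i" for i
  proof -
    have "P' i - P i = (W i + lyap_op p G P i - P i) + lyap_op p G (\<lambda>j. P' j - P j) i"
      by (rule lyap_eq_sub[OF assms(4)])
    also have "W i + lyap_op p G P i - P i = 0"
      by (simp add: assms(3)[of i, symmetric])
    finally show ?thesis
      by simp
  qed
  then have "(\<lambda>i. P' i - P i) = (\<lambda>i. 0)"
    by (rule lyap_fixpoint_eq_0[OF assms(1,2)])
  then show ?thesis
    by (simp add: fun_eq_iff)
qed

text \<open>Existence: by uniqueness, \<open>V \<mapsto> V - lyap_op p G V\<close> is an injective linear map on a
  finite-dimensional space, hence surjective.\<close>

lemma lyap_eq_exists:
  fixes p :: "'m::finite \<Rightarrow> 'm \<Rightarrow> real" and G :: "'m \<Rightarrow> real^'d^'d"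
  assumes "mss p G" and "\<forall>i j. 0 \<le> p i j"
  shows "\<exists>P. \<forall>i. P i = W i + lyap_op p G P i"
proof -
  define F where "F = (\<lambda>v::real^'d^'d^'m. v - (\<chi> i. lyap_op p G (($) v) i))"
  have F_lin: "linear F"
  proof (rule linearI)
    fix x y :: "real^'d^'d^'m" and c :: real
    have "($) (x + y) = (\<lambda>j. x$j + y$j)" "($) (c *\<^sub>R x) = (\<lambda>j. c *\<^sub>R x$j)"
      by auto
    then show "F (x + y) = F x + F y" "F (c *\<^sub>R x) = c *\<^sub>R F x"
      unfolding F_def by (simp_all add: lyap_op_add lyap_op_scaleR vec_eq_iff algebra_simps)
  qed
  have "inj F"
  proof (rule injI)
    fix x y
    assume "F x = F y"
    then have "F (x - y) = 0"
      by (simp add: linear_diff[OF F_lin])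
    then have "($) (x - y) = (\<lambda>i. 0)"
      by (intro lyap_fixpoint_eq_0[OF assms]) (simp add: F_def vec_eq_iff)
    then show "x = y"
      by (simp add: vec_eq_iff fun_eq_iff)
  qed
  then obtain v where "F v = (\<chi> i. W i)"
    by (metis eucl.linear_inj_imp_surj[OF F_lin] surjD)
  then have "\<forall>i. v$i = W i + lyap_op p G (($) v) i"
    by (simp add: F_def vec_eq_iff algebra_simps)
  then show ?thesis
    by blast
qed

lemma lyap_supersolution_partial_sums_le:
  assumes "\<forall>i j. 0 \<le> p i j" and "\<And>j y. bilin (W j + lyap_op p G P j) y y \<le> bilin (P j) y y"
  shows "(\<Sum>t<n. bilin ((lyap_op p G ^^ t) W i) x x) + bilin ((lyap_op p G ^^ n) P i) x x \<le> bilin (P i) x x"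
proof (induction n arbitrary: i x)
  case (Suc n)
  have "bilin ((lyap_op p G ^^ n) (\<lambda>j. W j + lyap_op p G P j) i) x x \<le> bilin ((lyap_op p G ^^ n) P i) x x"
    by (rule lyap_op_pow_mono[OF assms])
  then show ?case
    using Suc.IH[of i x] by (simp add: lyap_op_pow_add bilin_add funpow_Suc_right del: funpow.simps)
qed simp

lemma lyap_op_pow_partial_sum:
  assumes "\<And>i. P i = W i + lyap_op p G P i"
  shows "(\<Sum>t<n. (lyap_op p G ^^ t) W i) = P i - (lyap_op p G ^^ n) P i"
proof (induction n arbitrary: i)
  case (Suc n)
  have "W = (\<lambda>j. P j - lyap_op p G P j)"
    by (rule ext) (metis assms add_diff_cancel)
  then have "(lyap_op p G ^^ n) W i = (lyap_op p G ^^ n) P i - (lyap_op p G ^^ Suc n) P i"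
    by (simp add: lyap_op_pow_diff funpow_Suc_right del: funpow.simps)
  then show ?case
    using Suc by simp
qed simp

lemma lyap_eq_sums:
  assumes "mss p G" and "\<forall>i j. 0 \<le> p i j" and P: "\<And>i. P i = W i + lyap_op p G P i"
  shows "(\<lambda>t. bilin ((lyap_op p G ^^ t) W i) u v) sums bilin (P i) u v"
proof -
  have "(\<lambda>n. bilin (P i) u v - bilin ((lyap_op p G ^^ n) P i) u v) \<longlonglongrightarrow> bilin (P i) u v - 0"
    by (intro tendsto_diff tendsto_const lyap_op_pow_tendsto_0[OF assms(1,2)])
  then show ?thesis
    by (simp add: sums_def bilin_sum[symmetric] lyap_op_pow_partial_sum[OF P] bilin_diff)
qed

lemma lyap_eq_nonneg:
  assumes "mss p G" and "\<forall>i j. 0 \<le> p i j" and P: "\<And>i. P i = W i + lyap_op p G P i"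
    and W: "\<And>j y. 0 \<le> bilin (W j) y y"
  shows "0 \<le> bilin (P i) x x"
  by (rule sums_le[OF _ sums_zero lyap_eq_sums[OF assms(1-3)]]) (intro lyap_op_pow_nonneg assms(2) W)

lemma lyap_eq_symmetric:
  assumes "mss p G" and "\<forall>i j. 0 \<le> p i j" and P: "\<And>i. P i = W i + lyap_op p G P i"
    and W: "\<And>j. transpose (W j) = W j"
  shows "transpose (P i) = P i"
proof -
  have "transpose (P i) = W i + lyap_op p G (\<lambda>j. transpose (P j)) i" for i
    by (subst P[of i]) (simp add: transpose_add W transpose_lyap_op)
  from lyap_eq_unique[OF assms(1-3) this] show ?thesis
    by (simp add: fun_eq_iff)
qed

definition stage_weight :: "('m \<Rightarrow> real^'d^'d) \<Rightarrow> ('m \<Rightarrow> real^'k^'k) \<Rightarrow> ('m \<Rightarrow> real^'d^'k) \<Rightarrow> 'm \<Rightarrow> real^'d^'d"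
  where "stage_weight Q R K i = Q i + transpose (K i) ** R i ** K i"

lemma PK_lyap_eq:
  assumes "mss p (Gam A B K)" and "\<forall>i j. 0 \<le> p i j"
  shows "PK p A B Q R K i = stage_weight Q R K i + lyap_op p (Gam A B K) (PK p A B Q R K) i"
proof -
  have "\<exists>!P. \<forall>i. P i = stage_weight Q R K i + lyap_op p (Gam A B K) P i"
    using lyap_eq_exists[OF assms] lyap_eq_unique[OF assms] by metis
  then show ?thesis
    unfolding PK_def stage_weight_def lyap_op_def by (rule theI'[THEN spec])
qed

lemma stage_weight_symmetric:
  assumes "transpose (Q j) = Q j" and "transpose (R j) = R j"
  shows "transpose (stage_weight Q R K j) = stage_weight Q R K j"
  by (rule bilin_eqI)
    (simp add: stage_weight_def bilin_transpose bilin_add bilin_congruence bilin_commute[OF assms(1)]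
      bilin_commute[OF assms(2)])

lemma stage_weight_nonneg:
  assumes "\<And>j y. 0 \<le> bilin (Q j) y y" and "\<And>j y. 0 \<le> bilin (R j) y y"
  shows "0 \<le> bilin (stage_weight Q R K j) y y"
  using assms(1)[of j y] assms(2)[of j "K j *v y"] by (simp add: stage_weight_def bilin_add bilin_congruence)

lemma
  assumes "mss p (Gam A B K)" and "\<forall>i j. 0 \<le> p i j" and "\<And>j. posdef (Q j)" and "\<And>j. posdef (R j)"
  shows PK_symmetric: "transpose (PK p A B Q R K i) = PK p A B Q R K i"
    and PK_nonneg: "0 \<le> bilin (PK p A B Q R K i) x x"
proof -
  note PK_eq = PK_lyap_eq[OF assms(1,2), of Q R]
  show "transpose (PK p A B Q R K i) = PK p A B Q R K i"
    using assms(3,4) by (intro lyap_eq_symmetric[OF assms(1,2) PK_eq] stage_weight_symmetric posdef_symmetric)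
  show "0 \<le> bilin (PK p A B Q R K i) x x"
    using assms(3,4) by (intro lyap_eq_nonneg[OF assms(1,2) PK_eq] stage_weight_nonneg posdef_bilin_nonneg)
qed

section \<open>The cost as an expected quadratic form\<close>

definition frob_inner :: "real^'n^'n \<Rightarrow> real^'n^'n \<Rightarrow> real" where
  "frob_inner X M = trace (transpose X ** M)"

lemma frob_inner_entries: "frob_inner X M = (\<Sum>a\<in>UNIV. \<Sum>b\<in>UNIV. X$a$b * M$a$b)"
  by (simp add: frob_inner_def trace_def matrix_matrix_mult_def transpose_def) (rule sum.swap)

lemma frob_inner_zero_right [simp]: "frob_inner X 0 = 0"
  by (simp add: frob_inner_entries)

lemma frob_inner_zero_left [simp]: "frob_inner 0 M = 0"
  by (simp add: frob_inner_entries)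

lemma frob_inner_add_left: "frob_inner (X + Y) M = frob_inner X M + frob_inner Y M"
  by (simp add: frob_inner_entries algebra_simps sum.distrib)

lemma frob_inner_add_right: "frob_inner X (M + N) = frob_inner X M + frob_inner X N"
  by (simp add: frob_inner_entries algebra_simps sum.distrib)

lemma frob_inner_diff_right: "frob_inner X (M - N) = frob_inner X M - frob_inner X N"
  by (simp add: frob_inner_entries algebra_simps sum_subtractf)

lemma frob_inner_scaleR_right: "frob_inner X (c *\<^sub>R M) = c * frob_inner X M"
  by (simp add: frob_inner_entries sum_distrib_left mult_ac)

lemma frob_inner_sum_right: "frob_inner X (\<Sum>j\<in>J. f j) = (\<Sum>j\<in>J. frob_inner X (f j))"
  by (induction J rule: infinite_finite_induct) (simp_all add: frob_inner_add_right)

lemma frob_inner_scaleR_left: "frob_inner (c *\<^sub>R X) M = c * frob_inner X M"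
  by (simp add: frob_inner_entries sum_distrib_left mult_ac)

lemma frob_inner_sum_left: "frob_inner (\<Sum>j\<in>J. f j) M = (\<Sum>j\<in>J. frob_inner (f j) M)"
  by (induction J rule: infinite_finite_induct) (simp_all add: frob_inner_add_left)

lemma frob_inner_congruence: "frob_inner X (transpose G ** V ** G) = frob_inner (G ** X ** transpose G) V"
proof -
  have "trace (transpose X ** (transpose G ** V ** G)) = trace ((transpose X ** transpose G ** V) ** G)"
    by (simp add: matrix_mul_assoc)
  also have "\<dots> = trace (G ** (transpose X ** transpose G ** V))"
    by (rule trace_mul_sym)
  also have "\<dots> = trace (transpose (G ** X ** transpose G) ** V)"
    by (simp add: matrix_transpose_mul matrix_mul_assoc)
  finally show ?thesis
    by (simp add: frob_inner_def)
qed

lemma frob_inner_gram: "frob_inner X (transpose L ** L) = (\<Sum>r\<in>UNIV. bilin X (L$r) (L$r))"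
proof -
  have "frob_inner X (transpose L ** L) = (\<Sum>a\<in>UNIV. \<Sum>b\<in>UNIV. \<Sum>r\<in>UNIV. X$a$b * (L$r$a * L$r$b))"
    by (simp add: frob_inner_entries matrix_matrix_mult_def transpose_def sum_distrib_left)
  also have "\<dots> = (\<Sum>r\<in>UNIV. \<Sum>a\<in>UNIV. \<Sum>b\<in>UNIV. X$a$b * (L$r$a * L$r$b))"
    by (subst sum.swap) (rule sum.cong[OF refl], rule sum.swap)
  also have "\<dots> = (\<Sum>r\<in>UNIV. bilin X (L$r) (L$r))"
    by (simp add: bilin_entries mult_ac)
  finally show ?thesis .
qed

lemma frob_inner_rows: "frob_inner X M = (\<Sum>c\<in>UNIV. X$c \<bullet> M$c)"
  by (simp add: frob_inner_entries inner_vec_def)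

lemma frob_inner_axis: "frob_inner X (axis a v) = X$a \<bullet> v"
proof -
  have "X$c \<bullet> axis a v $ c = (if c = a then X$a \<bullet> v else 0)" for c
    by (simp add: axis_def)
  then show ?thesis
    by (simp add: frob_inner_rows)
qed

lemma integrable_component_mult:
  fixes x0 :: "'a \<Rightarrow> real^'d"
  assumes "x0 \<in> borel_measurable M" and "integrable M (\<lambda>\<omega>. (norm (x0 \<omega>))\<^sup>2)"
  shows "integrable M (\<lambda>\<omega>. x0 \<omega> $ a * x0 \<omega> $ b)"
proof (rule Bochner_Integration.integrable_bound[OF assms(2)])
  have "(\<lambda>x::real^'d. x $ c) \<in> borel_measurable borel" for c
    by (intro borel_measurable_continuous_onI continuous_intros)
  then have "(\<lambda>\<omega>. x0 \<omega> $ c) \<in> borel_measurable M" for c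
    using measurable_compose[OF assms(1)] by blast
  then show "(\<lambda>\<omega>. x0 \<omega> $ a * x0 \<omega> $ b) \<in> borel_measurable M"
    by measurable
  have "\<bar>x0 \<omega> $ a\<bar> * \<bar>x0 \<omega> $ b\<bar> \<le> norm (x0 \<omega>) * norm (x0 \<omega>)" for \<omega>
    by (intro mult_mono component_le_norm_cart) auto
  then show "AE \<omega> in M. norm (x0 \<omega> $ a * x0 \<omega> $ b) \<le> norm ((norm (x0 \<omega>))\<^sup>2)"
    by (simp add: abs_mult power2_eq_square)
qed

lemma
  fixes x0 :: "'a \<Rightarrow> real^'d"
  assumes "x0 \<in> borel_measurable M" and "integrable M (\<lambda>\<omega>. (norm (x0 \<omega>))\<^sup>2)"
  shows integrable_bilin: "integrable M (\<lambda>\<omega>. bilin N (x0 \<omega>) (x0 \<omega>))"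
    and integral_bilin: "(\<integral>\<omega>. bilin N (x0 \<omega>) (x0 \<omega>) \<partial>M) = frob_inner (second_moment M x0) N"
proof -
  have entries: "bilin N (x0 \<omega>) (x0 \<omega>) = (\<Sum>a\<in>UNIV. \<Sum>b\<in>UNIV. N$a$b * (x0 \<omega> $ a * x0 \<omega> $ b))" for \<omega>
    by (simp add: bilin_entries mult_ac)
  note integrable = integrable_component_mult[OF assms]
  show "integrable M (\<lambda>\<omega>. bilin N (x0 \<omega>) (x0 \<omega>))"
    unfolding entries
    by (intro Bochner_Integration.integrable_sum Bochner_Integration.integrable_mult_right integrable)
  have "(\<integral>\<omega>. bilin N (x0 \<omega>) (x0 \<omega>) \<partial>M)
      = (\<Sum>a\<in>UNIV. \<Sum>b\<in>UNIV. N$a$b * (\<integral>\<omega>. x0 \<omega> $ a * x0 \<omega> $ b \<partial>M))"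
    unfolding entries by (simp add: integral_sum integrable_sum integrable_mult_right integrable)
  then show "(\<integral>\<omega>. bilin N (x0 \<omega>) (x0 \<omega>) \<partial>M) = frob_inner (second_moment M x0) N"
    by (simp add: frob_inner_entries second_moment_def mult_ac)
qed

text \<open>\<open>expected_form M x0 \<pi> V\<close> is \<open>E[x\<^sub>0\<^sup>T V\<^bsub>\<omega>(0)\<^esub> x\<^sub>0]\<close>.\<close>

definition expected_form :: "'a measure \<Rightarrow> ('a \<Rightarrow> real^'d) \<Rightarrow> ('m::finite \<Rightarrow> real) \<Rightarrow> ('m \<Rightarrow> real^'d^'d) \<Rightarrow> real"
  where "expected_form M x0 \<pi> V = (\<Sum>i\<in>UNIV. \<pi> i * frob_inner (second_moment M x0) (V i))"

lemma expected_form_diff: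
  "expected_form M x0 \<pi> (\<lambda>i. V i - V' i) = expected_form M x0 \<pi> V - expected_form M x0 \<pi> V'"
  by (simp add: expected_form_def frob_inner_diff_right right_diff_distrib sum_subtractf)

lemma expected_form_scaleR: "expected_form M x0 \<pi> (\<lambda>i. c *\<^sub>R V i) = c * expected_form M x0 \<pi> V"
  by (simp add: expected_form_def frob_inner_scaleR_right sum_distrib_left mult_ac)

lemma expected_form_eq_X0: "expected_form M x0 \<pi> V = (\<Sum>i\<in>UNIV. frob_inner (X0 M x0 \<pi> i) (V i))"
  by (simp add: expected_form_def X0_def frob_inner_scaleR_left)

lemma expected_form_mono:
  fixes x0 :: "'a \<Rightarrow> real^'d"
  assumes "x0 \<in> borel_measurable M" and "integrable M (\<lambda>\<omega>. (norm (x0 \<omega>))\<^sup>2)"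
    and "\<forall>i. 0 \<le> \<pi> i" and "\<And>i x. bilin (V i) x x \<le> bilin (V' i) x x"
  shows "expected_form M x0 \<pi> V \<le> expected_form M x0 \<pi> V'"
  unfolding expected_form_def integral_bilin[OF assms(1,2), symmetric]
  by (intro sum_mono mult_left_mono integral_mono integrable_bilin assms(1,2,4) assms(3)[rule_format])

lemma expected_form_lyap_eq_sums:
  assumes "mss p G" and "\<forall>i j. 0 \<le> p i j" and "\<And>i. P i = W i + lyap_op p G P i"
  shows "(\<lambda>t. expected_form M x0 \<pi> ((lyap_op p G ^^ t) W)) sums expected_form M x0 \<pi> P"
  unfolding expected_form_def frob_inner_entries bilin_axis[symmetric]
  by (intro sums_sum sums_mult lyap_eq_sums[OF assms])

lemma cost_integrand:
  "(let x = X; u = - (Kj *v x) in x \<bullet> (Qj *v x) + u \<bullet> (Rj *v u)) = bilin (Qj + transpose Kj ** Rj ** Kj) X X"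
  by (simp add: Let_def bilin_add bilin_congruence)
    (simp add: bilin_def linear_neg[OF matrix_vector_mul_linear])

lemma cost_term_eq_expected_form:
  fixes x0 :: "'a \<Rightarrow> real^'d" and p :: "'m::finite \<Rightarrow> 'm \<Rightarrow> real"
  assumes "x0 \<in> borel_measurable M" and "integrable M (\<lambda>\<omega>. (norm (x0 \<omega>))\<^sup>2)"
  shows "(\<Sum>w\<in>paths t. \<pi> (w 0) * path_trans p w t *
        (\<integral>\<omega>. (let x = Phi (Gam A B K) w t *v x0 \<omega>; u = - (K (w t) *v x)
               in x \<bullet> (Q (w t) *v x) + u \<bullet> (R (w t) *v u)) \<partial>M))
    = expected_form M x0 \<pi> ((lyap_op p (Gam A B K) ^^ t) (stage_weight Q R K))"
proof -
  let ?G = "Gam A B K" and ?W = "stage_weight Q R K"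
  have "integrable M (\<lambda>\<omega>. bilin (?W (w t)) (Phi ?G w t *v x0 \<omega>) (Phi ?G w t *v x0 \<omega>))" for w
    using integrable_bilin[OF assms, of "transpose (Phi ?G w t) ** ?W (w t) ** Phi ?G w t"]
    by (simp add: bilin_congruence)
  then have "(\<Sum>w\<in>paths t. \<pi> (w 0) * path_trans p w t *
        (\<integral>\<omega>. bilin (?W (w t)) (Phi ?G w t *v x0 \<omega>) (Phi ?G w t *v x0 \<omega>) \<partial>M))
     = (\<integral>\<omega>. (\<Sum>i\<in>UNIV. \<pi> i * bilin ((lyap_op p ?G ^^ t) ?W i) (x0 \<omega>) (x0 \<omega>)) \<partial>M)"
    by (simp add: sum_paths_eq_lyap_op_pow[symmetric] integrable_mult_right)
  also have "\<dots> = expected_form M x0 \<pi> ((lyap_op p ?G ^^ t) ?W)"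
    by (simp add: integrable_bilin[OF assms] integral_bilin[OF assms] integrable_mult_right expected_form_def)
  finally show ?thesis
    by (simp only: cost_integrand stage_weight_def)
qed

lemma cost_eq_expected_form:
  fixes x0 :: "'a \<Rightarrow> real^'d" and p :: "'m::finite \<Rightarrow> 'm \<Rightarrow> real"
  assumes "x0 \<in> borel_measurable M" and "integrable M (\<lambda>\<omega>. (norm (x0 \<omega>))\<^sup>2)"
    and "mss p (Gam A B K)" and "\<forall>i j. 0 \<le> p i j"
  shows "cost M x0 \<pi> p A B Q R K = ereal (expected_form M x0 \<pi> (PK p A B Q R K))"
proof -
  have "(\<lambda>t. ereal (expected_form M x0 \<pi> ((lyap_op p (Gam A B K) ^^ t) (stage_weight Q R K))))
      sums ereal (expected_form M x0 \<pi> (PK p A B Q R K))"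
    unfolding sums_ereal by (intro expected_form_lyap_eq_sums PK_lyap_eq assms(3,4))
  then show ?thesis
    unfolding cost_def cost_term_eq_expected_form[OF assms(1,2)] by (simp add: sums_iff)
qed

lemma sum_frob_inner_lyap_op:
  "(\<Sum>i\<in>UNIV. frob_inner (X i) (lyap_op p G V i)) = (\<Sum>j\<in>UNIV. frob_inner (Top p G X j) (V j))"
proof -
  have "(\<Sum>i\<in>UNIV. frob_inner (X i) (lyap_op p G V i))
      = (\<Sum>i\<in>UNIV. \<Sum>j\<in>UNIV. p i j * frob_inner (G i ** X i ** transpose (G i)) (V j))"
    by (simp add: lyap_op_eq_sum frob_inner_sum_right frob_inner_scaleR_right frob_inner_congruence)
  also have "\<dots> = (\<Sum>j\<in>UNIV. frob_inner (Top p G X j) (V j))"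
    by (subst sum.swap) (simp add: Top_def frob_inner_sum_left frob_inner_scaleR_left)
  finally show ?thesis .
qed

lemma sum_frob_inner_lyap_op_pow:
  "(\<Sum>i\<in>UNIV. frob_inner (X i) ((lyap_op p G ^^ t) V i)) = (\<Sum>j\<in>UNIV. frob_inner ((Top p G ^^ t) X j) (V j))"
proof (induction t arbitrary: V)
  case (Suc t)
  have "(\<Sum>i\<in>UNIV. frob_inner (X i) ((lyap_op p G ^^ Suc t) V i))
      = (\<Sum>i\<in>UNIV. frob_inner (X i) ((lyap_op p G ^^ t) (lyap_op p G V) i))"
    by (simp add: funpow_Suc_right del: funpow.simps)
  also have "\<dots> = (\<Sum>j\<in>UNIV. frob_inner (Top p G ((Top p G ^^ t) X) j) (V j))"
    by (simp only: Suc.IH sum_frob_inner_lyap_op)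
  finally show ?case
    by simp
qed simp

lemma sums_matrixI:
  fixes f :: "nat \<Rightarrow> real^'n^'m"
  assumes "\<And>a b. (\<lambda>t. f t $ a $ b) sums (s $ a $ b)"
  shows "f sums s"
  using assms unfolding sums_def by (intro vec_tendstoI) simp

text \<open>By duality, each entry of \<open>(Top p G ^^ t) (X0 M x0 \<pi>) i\<close> is the \<open>expected_form\<close> of
  \<open>lyap_op\<close> iterated on a matrix unit, so the series defining \<open>XK\<close> converges entrywise.\<close>

lemma XK_sums:
  fixes x0 :: "'a \<Rightarrow> real^'d" and p :: "'m::finite \<Rightarrow> 'm \<Rightarrow> real"
  assumes "mss p (Gam A B K)" and "\<forall>i j. 0 \<le> p i j"
  shows "(\<lambda>t. (Top p (Gam A B K) ^^ t) (X0 M x0 \<pi>) i) sums XK M x0 \<pi> p A B K i"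
proof -
  let ?G = "Gam A B K"
  have "summable (\<lambda>t. (Top p ?G ^^ t) (X0 M x0 \<pi>) i $ a $ b)" for a b
  proof -
    define E where "E = (\<lambda>j. if j = i then axis a (axis b 1) else (0::real^'d^'d))"
    have entry: "(Top p ?G ^^ t) (X0 M x0 \<pi>) i $ a $ b = expected_form M x0 \<pi> ((lyap_op p ?G ^^ t) E)" for t
      unfolding expected_form_eq_X0 sum_frob_inner_lyap_op_pow
      by (simp add: E_def frob_inner_axis inner_axis if_distrib cong: if_cong)
    obtain P where "\<forall>j. P j = E j + lyap_op p ?G P j"
      using lyap_eq_exists[OF assms] by blast
    then have "summable (\<lambda>t. expected_form M x0 \<pi> ((lyap_op p ?G ^^ t) E))"
      using sums_summable[OF expected_form_lyap_eq_sums[OF assms]] by blast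
    then show ?thesis
      by (simp only: entry)
  qed
  then have "(\<lambda>t. (Top p ?G ^^ t) (X0 M x0 \<pi>) i) sums (\<chi> a b. \<Sum>t. (Top p ?G ^^ t) (X0 M x0 \<pi>) i $ a $ b)"
    by (intro sums_matrixI) (simp add: summable_sums)
  then show ?thesis
    unfolding XK_def by (simp add: sums_iff)
qed

lemma expected_form_lyap_op_pow_sums_XK:
  fixes x0 :: "'a \<Rightarrow> real^'d" and p :: "'m::finite \<Rightarrow> 'm \<Rightarrow> real"
  assumes "mss p (Gam A B K)" and "\<forall>i j. 0 \<le> p i j"
  shows "(\<lambda>t. expected_form M x0 \<pi> ((lyap_op p (Gam A B K) ^^ t) Z))
    sums (\<Sum>i\<in>UNIV. frob_inner (XK M x0 \<pi> p A B K i) (Z i))"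
  unfolding expected_form_eq_X0 sum_frob_inner_lyap_op_pow unfolding frob_inner_entries
  by (intro sums_sum sums_mult2 sums_vec_nth XK_sums[OF assms])

lemma mu_nonneg: "\<forall>i. 0 < \<pi> i \<Longrightarrow> 0 \<le> mu M x0 \<pi>"
  unfolding mu_def by (intro mult_nonneg_nonneg sigma_min_nonneg less_imp_le) (subst Min_gr_iff, auto)

lemma expected_form_gram_ge:
  assumes "posdef (second_moment M x0)" and "\<forall>i. 0 < \<pi> i"
  shows "mu M x0 \<pi> * (\<Sum>i\<in>UNIV. (norm (L i))\<^sup>2) \<le> expected_form M x0 \<pi> (\<lambda>i. transpose (L i) ** L i)"
proof -
  let ?S = "second_moment M x0"
  have "sigma_min ?S * (norm (L i))\<^sup>2 \<le> frob_inner ?S (transpose (L i) ** L i)" for i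
    unfolding frob_inner_gram power2_norm_matrix sum_distrib_left
    using assms(1) by (intro sum_mono sigma_min_mult_le_bilin posdef_symmetric posdef_bilin_nonneg)
  moreover have "Min (range \<pi>) \<le> \<pi> i" for i
    by (rule Min_le) auto
  ultimately have "Min (range \<pi>) * (sigma_min ?S * (norm (L i))\<^sup>2)
      \<le> \<pi> i * frob_inner ?S (transpose (L i) ** L i)" for i
    using assms(2) sigma_min_nonneg[of ?S] by (intro mult_mono) (auto intro: less_imp_le)
  then show ?thesis
    unfolding mu_def expected_form_def sum_distrib_left by (simp add: sum_mono mult.assoc)
qed

lemma sum_frob_inner_gram_le:
  "(\<Sum>i\<in>UNIV. frob_inner (X i) (transpose (L i) ** L i)) \<le> max_norm X * (\<Sum>i\<in>UNIV. (norm (L i))\<^sup>2)"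
proof -
  have "bilin (X i) (L i $ r) (L i $ r) \<le> max_norm X * (norm (L i $ r))\<^sup>2" for i r
    by (rule order_trans[OF bilin_le_specnorm mult_right_mono[OF specnorm_le_max_norm]]) simp
  then show ?thesis
    unfolding frob_inner_gram power2_norm_matrix sum_distrib_left by (intro sum_mono)
qed

section \<open>Gradient step and gradient dominance\<close>

lemma sums_le_head:
  fixes f :: "nat \<Rightarrow> real"
  assumes "f sums s" and "\<And>n. f (Suc n) \<le> 0"
  shows "s \<le> f 0"
proof -
  have "(\<lambda>n. f (Suc n)) sums (s - f 0)"
    using assms(1) by (simp add: sums_Suc_iff)
  from sums_le[OF _ this sums_zero] have "s - f 0 \<le> 0"
    using assms(2) by blast
  then show ?thesis
    by simp
qed

definition lyap_residual :: "('m::finite \<Rightarrow> 'm \<Rightarrow> real) \<Rightarrow> ('m \<Rightarrow> real^'d^'d) \<Rightarrow> ('m \<Rightarrow> real^'k^'d)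
    \<Rightarrow> ('m \<Rightarrow> real^'d^'d) \<Rightarrow> ('m \<Rightarrow> real^'k^'k) \<Rightarrow> ('m \<Rightarrow> real^'d^'k) \<Rightarrow> ('m \<Rightarrow> real^'d^'d) \<Rightarrow> 'm \<Rightarrow> real^'d^'d"
  where "lyap_residual p A B Q R K P i = stage_weight Q R K i + lyap_op p (Gam A B K) P i - P i"

lemma Gam_mult_vec: "Gam A B K i *v x = A i *v x - B i *v (K i *v x)"
  by (simp add: Gam_def matrix_vector_mult_diff_rdistrib matrix_vector_mul_assoc)

lemma bilin_lyap_residual_PK:
  assumes "mss p (Gam A B K)" and "\<forall>i j. 0 \<le> p i j" and "\<And>j. posdef (Q j)" and "\<And>j. posdef (R j)"
  shows "bilin (lyap_residual p A B Q R K' (PK p A B Q R K) i) x x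
    = bilin (R i + transpose (B i) ** Eop p (PK p A B Q R K) i ** B i)
        (K i *v x - K' i *v x) (K i *v x - K' i *v x)
      - 2 * ((K i *v x - K' i *v x) \<bullet> (LK p A B Q R K i *v x))"
proof -
  define P where "P = PK p A B Q R K"
  define y where "y = K i *v x - K' i *v x"
  define E where "E = Eop p P i"
  define g where "g = Gam A B K i *v x"
  define k where "k = K i *v x"
  have E_sym: "bilin E a b = bilin E b a" for a b
    unfolding E_def P_def using PK_symmetric[OF assms(1-4)]
    by (intro bilin_commute) (simp add: Eop_def transpose_def vec_eq_iff sum_distrib_left)
  have R_sym: "bilin (R i) a b = bilin (R i) b a" for a b
    using assms(4) by (intro bilin_commute posdef_symmetric)
  have "K' i *v x = k - y" and "Gam A B K' i *v x = g + B i *v y"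
    by (simp_all add: y_def k_def g_def Gam_mult_vec algebra_simps)
  then have residual: "bilin (lyap_residual p A B Q R K' P i) x x
      = bilin (R i) (k - y) (k - y) + bilin E (g + B i *v y) (g + B i *v y) - bilin (R i) k k - bilin E g g"
    using PK_lyap_eq[OF assms(1,2), of Q R i]
    by (simp add: lyap_residual_def stage_weight_def lyap_op_def bilin_add bilin_diff bilin_uminus
        bilin_congruence E_def P_def g_def k_def)
  have "LK p A B Q R K i *v x = R i *v k - transpose (B i) *v (E *v g)"
    by (simp add: LK_def Let_def E_def P_def g_def k_def Gam_mult_vec matrix_vector_mult_diff_rdistrib
        matrix_vector_mult_add_rdistrib matrix_vector_mult_diff_distrib matrix_vector_mul_assoc[symmetric]
        del: transpose_matrix_vector)
  then have gradient: "y \<bullet> (LK p A B Q R K i *v x) = bilin (R i) y k - bilin E (B i *v y) g"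
    by (simp add: bilin_def inner_diff_right inner_transpose_right del: transpose_matrix_vector)
  have "bilin (R i + transpose (B i) ** E ** B i) y y = bilin (R i) y y + bilin E (B i *v y) (B i *v y)"
    by (simp add: bilin_add bilin_congruence)
  moreover have "bilin (R i) (k - y) (k - y) = bilin (R i) k k - 2 * bilin (R i) y k + bilin (R i) y y"
    by (simp add: bilin_diff_left bilin_diff_right R_sym[of k y])
  moreover have "bilin E (g + B i *v y) (g + B i *v y)
      = bilin E g g + 2 * bilin E (B i *v y) g + bilin E (B i *v y) (B i *v y)"
    by (simp add: bilin_add_left bilin_add_right E_sym[of g "B i *v y"])
  ultimately show ?thesis
    unfolding P_def[symmetric] y_def[symmetric] residual E_def[symmetric] gradient
    by (simp add: algebra_simps)
qed

lemma lyap_residual_gradient_step_le: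
  assumes "mss p (Gam A B K)" and "\<forall>i j. 0 \<le> p i j" and "\<And>j. posdef (Q j)" and "\<And>j. posdef (R j)"
    and "0 < \<eta>"
    and "\<eta> \<le> 1 / (2 * max_norm (\<lambda>i. R i + transpose (B i) ** Eop p (PK p A B Q R K) i ** B i))"
  shows "bilin (lyap_residual p A B Q R (\<lambda>i. K i - (2 * \<eta>) *\<^sub>R LK p A B Q R K i) (PK p A B Q R K) i) x x
    \<le> - 2 * \<eta> * (norm (LK p A B Q R K i *v x))\<^sup>2"
proof -
  define S where "S = (\<lambda>i. R i + transpose (B i) ** Eop p (PK p A B Q R K) i ** B i)"
  define l where "l = LK p A B Q R K i *v x"
  have "0 < max_norm S"
  proof (rule ccontr)
    assume "\<not> 0 < max_norm S"
    then have "1 / (2 * max_norm S) \<le> 0"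
      by (simp add: divide_nonneg_nonpos)
    then show False
      using assms(5,6) unfolding S_def by linarith
  qed
  then have "2 * \<eta> * max_norm S \<le> 1"
    using assms(6) unfolding S_def[symmetric] by (simp add: field_simps)
  then have "2 * \<eta> * max_norm S * (norm l)\<^sup>2 \<le> (norm l)\<^sup>2"
    using assms(5) \<open>0 < max_norm S\<close> by (intro mult_left_le_one_le) auto
  moreover have "bilin (S i) l l \<le> max_norm S * (norm l)\<^sup>2"
    by (rule order_trans[OF bilin_le_specnorm mult_right_mono[OF specnorm_le_max_norm]]) simp
  then have "2 * \<eta> * bilin (S i) l l \<le> 2 * \<eta> * max_norm S * (norm l)\<^sup>2"
    using assms(5) by (simp add: mult.assoc)
  ultimately have "2 * \<eta> * bilin (S i) l l \<le> (norm l)\<^sup>2"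
    by linarith
  then have "2 * \<eta> * (2 * \<eta> * bilin (S i) l l - 2 * (norm l)\<^sup>2) \<le> 2 * \<eta> * (- (norm l)\<^sup>2)"
    using assms(5) by (intro mult_left_mono) auto
  moreover have "K i *v x - (K i - (2 * \<eta>) *\<^sub>R LK p A B Q R K i) *v x = (2 * \<eta>) *\<^sub>R l"
    by (simp add: l_def matrix_vector_mult_diff_rdistrib scaleR_matrix_vector_assoc[symmetric])
  then have "bilin (lyap_residual p A B Q R (\<lambda>i. K i - (2 * \<eta>) *\<^sub>R LK p A B Q R K i) (PK p A B Q R K) i) x x
      = 2 * \<eta> * (2 * \<eta> * bilin (S i) l l - 2 * (norm l)\<^sup>2)"
    unfolding bilin_lyap_residual_PK[OF assms(1-4)] l_def[symmetric]
    by (simp add: S_def bilin_scaleR_left bilin_scaleR_right power2_norm_eq_inner right_diff_distrib)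
  ultimately show ?thesis
    by (simp add: l_def)
qed

lemma lyap_residual_PK_ge:
  assumes "mss p (Gam A B K)" and "\<forall>i j. 0 \<le> p i j" and "\<And>j. posdef (Q j)" and "\<And>j. posdef (R j)"
  shows "- (norm (LK p A B Q R K i *v x))\<^sup>2 / Lambda_min R
    \<le> bilin (lyap_residual p A B Q R K' (PK p A B Q R K) i) x x"
proof -
  define \<sigma> where "\<sigma> = Lambda_min R"
  define y where "y = K i *v x - K' i *v x"
  define l where "l = LK p A B Q R K i *v x"
  have "0 < \<sigma>"
    unfolding \<sigma>_def using assms(4) by (rule Lambda_min_pos)
  have "0 \<le> bilin (Eop p (PK p A B Q R K) i) (B i *v y) (B i *v y)"
    unfolding bilin_Eop using assms(2) PK_nonneg[OF assms] by (intro sum_nonneg mult_nonneg_nonneg) auto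
  then have "\<sigma> * (norm y)\<^sup>2 \<le> bilin (R i + transpose (B i) ** Eop p (PK p A B Q R K) i ** B i) y y"
    using Lambda_min_mult_le_bilin[of R, OF assms(4), of y i] by (simp add: \<sigma>_def bilin_add bilin_congruence)
  moreover have "0 \<le> (norm (\<sigma> *\<^sub>R y - l))\<^sup>2"
    by simp
  then have "- (norm l)\<^sup>2 \<le> \<sigma> * (\<sigma> * (norm y)\<^sup>2 - 2 * (y \<bullet> l))"
    unfolding power2_norm_eq_inner by (simp add: inner_diff_left inner_diff_right inner_commute algebra_simps)
  then have "- (norm l)\<^sup>2 / \<sigma> \<le> \<sigma> * (norm y)\<^sup>2 - 2 * (y \<bullet> l)"
    using \<open>0 < \<sigma>\<close> by (simp add: field_simps)
  ultimately show ?thesis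
    unfolding bilin_lyap_residual_PK[OF assms] \<sigma>_def[symmetric] y_def[symmetric] l_def[symmetric] by linarith
qed

text \<open>The partial sums \<open>\<Sum>\<^sub>t\<^sub><\<^sub>n lyap_op\<^sup>t (\<lambda>_. mat 1)\<close> stay below \<open>P / Lambda_min Q\<close>,
  so their terms tend to zero.\<close>

lemma mss_if_lyap_residual_nonpos:
  assumes p: "\<forall>i j. 0 \<le> p i j" and Q: "\<And>j. posdef (Q j)" and R: "\<And>j y. 0 \<le> bilin (R j) y y"
    and P: "\<And>j y. 0 \<le> bilin (P j) y y"
    and residual: "\<And>i x. bilin (lyap_residual p A B Q R K P i) x x \<le> 0"
  shows "mss p (Gam A B K)"
  unfolding mss_iff_lyap_op_pow
proof (intro allI)
  fix i x
  let ?L = "lyap_op p (Gam A B K)" and ?W = "stage_weight Q R K"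
  define q where "q = Lambda_min Q"
  have "0 < q"
    unfolding q_def using Q by (rule Lambda_min_pos)
  have partial_sums: "(\<Sum>t<n. bilin ((?L ^^ t) ?W i) x x) + bilin ((?L ^^ n) P i) x x \<le> bilin (P i) x x"
    for n
    using residual
    by (intro lyap_supersolution_partial_sums_le[OF p]) (simp add: lyap_residual_def bilin_add bilin_diff)
  have W_ge: "q * bilin ((?L ^^ t) (\<lambda>_. mat 1) i) x x \<le> bilin ((?L ^^ t) ?W i) x x" for t
  proof -
    have "bilin (q *\<^sub>R mat 1) y y \<le> bilin (?W j) y y" for j y
      using Lambda_min_mult_le_bilin[of Q, OF Q, of y j] R[of j "K j *v y"]
      by (simp add: q_def stage_weight_def bilin_add bilin_congruence bilin_scaleR bilin_mat_1
          power2_norm_eq_inner)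
    then have "bilin ((?L ^^ t) (\<lambda>_. q *\<^sub>R mat 1) i) x x \<le> bilin ((?L ^^ t) ?W i) x x"
      by (intro lyap_op_pow_mono[OF p])
    then show ?thesis
      by (simp add: lyap_op_pow_scaleR bilin_scaleR)
  qed
  have "(\<Sum>t<n. bilin ((?L ^^ t) (\<lambda>_. mat 1) i) x x) \<le> bilin (P i) x x / q" for n
  proof -
    have "q * (\<Sum>t<n. bilin ((?L ^^ t) (\<lambda>_. mat 1) i) x x) \<le> (\<Sum>t<n. bilin ((?L ^^ t) ?W i) x x)"
      unfolding sum_distrib_left by (intro sum_mono W_ge)
    also have "\<dots> \<le> bilin (P i) x x"
      using partial_sums[of n] lyap_op_pow_nonneg[where V=P and G="Gam A B K" and n=n and i=i and x=x, OF p P]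
      by linarith
    finally show ?thesis
      using \<open>0 < q\<close> by (simp add: field_simps)
  qed
  then have "summable (\<lambda>t. bilin ((?L ^^ t) (\<lambda>_. mat 1) i) x x)"
    by (intro summableI_nonneg_bounded lyap_op_pow_nonneg[OF p]) (simp_all add: bilin_mat_1)
  then show "(\<lambda>t. bilin ((?L ^^ t) (\<lambda>_. mat 1) i) x x) \<longlonglongrightarrow> 0"
    by (rule summable_LIMSEQ_zero)
qed

lemma mss_gradient_step:
  assumes "mss p (Gam A B K)" and "\<forall>i j. 0 \<le> p i j" and "\<And>j. posdef (Q j)" and "\<And>j. posdef (R j)"
    and "0 < \<eta>"
    and "\<eta> \<le> 1 / (2 * max_norm (\<lambda>i. R i + transpose (B i) ** Eop p (PK p A B Q R K) i ** B i))"
  shows "mss p (Gam A B (\<lambda>i. K i - (2 * \<eta>) *\<^sub>R LK p A B Q R K i))"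
proof (rule mss_if_lyap_residual_nonpos)
  fix i x
  have "0 \<le> 2 * \<eta> * (norm (LK p A B Q R K i *v x))\<^sup>2"
    using assms(5) by simp
  then show "bilin (lyap_residual p A B Q R (\<lambda>i. K i - (2 * \<eta>) *\<^sub>R LK p A B Q R K i)
      (PK p A B Q R K) i) x x \<le> 0"
    using lyap_residual_gradient_step_le[OF assms, of i x] by linarith
qed (use assms in \<open>auto intro: posdef_bilin_nonneg PK_nonneg\<close>)

lemma expected_form_PK_diff_sums:
  assumes "mss p (Gam A B K)" and "\<forall>i j. 0 \<le> p i j"
  shows "(\<lambda>t. expected_form M x0 \<pi> ((lyap_op p (Gam A B K) ^^ t) (lyap_residual p A B Q R K P)))
    sums (expected_form M x0 \<pi> (PK p A B Q R K) - expected_form M x0 \<pi> P)"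
proof -
  have "PK p A B Q R K i - P i
      = lyap_residual p A B Q R K P i + lyap_op p (Gam A B K) (\<lambda>j. PK p A B Q R K j - P j) i" for i
    unfolding lyap_residual_def by (rule lyap_eq_sub[OF PK_lyap_eq[OF assms]])
  from expected_form_lyap_eq_sums[OF assms this] show ?thesis
    by (simp add: expected_form_diff)
qed

lemma expected_form_PK_gradient_step_le:
  fixes x0 :: "'a \<Rightarrow> real^'d" and \<pi> :: "'m::finite \<Rightarrow> real"
  assumes "x0 \<in> borel_measurable M" and "integrable M (\<lambda>\<omega>. (norm (x0 \<omega>))\<^sup>2)"
    and "posdef (second_moment M x0)" and "\<forall>i. 0 < \<pi> i"
    and "mss p (Gam A B K)" and "\<forall>i j. 0 \<le> p i j" and "\<And>j. posdef (Q j)" and "\<And>j. posdef (R j)"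
    and "0 < \<eta>"
    and "\<eta> \<le> 1 / (2 * max_norm (\<lambda>i. R i + transpose (B i) ** Eop p (PK p A B Q R K) i ** B i))"
  shows "expected_form M x0 \<pi> (PK p A B Q R (\<lambda>i. K i - (2 * \<eta>) *\<^sub>R LK p A B Q R K i))
      - expected_form M x0 \<pi> (PK p A B Q R K)
    \<le> - 2 * \<eta> * (mu M x0 \<pi> * (\<Sum>i\<in>UNIV. (norm (LK p A B Q R K i))\<^sup>2))"
proof -
  let ?K' = "\<lambda>i. K i - (2 * \<eta>) *\<^sub>R LK p A B Q R K i"
  let ?Y = "lyap_residual p A B Q R ?K' (PK p A B Q R K)"
  let ?Z = "\<lambda>i. transpose (LK p A B Q R K i) ** LK p A B Q R K i"
  have \<pi>: "\<forall>i. 0 \<le> \<pi> i"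
    using assms(4) by (simp add: less_imp_le)
  have Y_le: "bilin (?Y i) x x \<le> bilin ((- 2 * \<eta>) *\<^sub>R ?Z i) x x" for i x
    using lyap_residual_gradient_step_le[OF assms(5-10)] by (simp add: bilin_scaleR bilin_uminus bilin_gram)
  have "bilin (?Y i) x x \<le> 0" for i x
  proof -
    have "0 \<le> 2 * \<eta> * (norm (LK p A B Q R K i *v x))\<^sup>2"
      using \<open>0 < \<eta>\<close> by simp
    then show ?thesis
      using lyap_residual_gradient_step_le[OF assms(5-10), of i x] by linarith
  qed
  then have "expected_form M x0 \<pi> ((lyap_op p (Gam A B ?K') ^^ Suc t) ?Y)
      \<le> expected_form M x0 \<pi> ((lyap_op p (Gam A B ?K') ^^ Suc t) (\<lambda>_. 0))" for t
    by (intro expected_form_mono[OF assms(1,2) \<pi>] lyap_op_pow_mono assms(6)) simp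
  then have "expected_form M x0 \<pi> (PK p A B Q R ?K') - expected_form M x0 \<pi> (PK p A B Q R K)
      \<le> expected_form M x0 \<pi> ((lyap_op p (Gam A B ?K') ^^ 0) ?Y)"
    by (intro sums_le_head[OF expected_form_PK_diff_sums[OF mss_gradient_step[OF assms(5-10)] assms(6)]])
      (simp add: expected_form_def del: funpow.simps)
  also have "\<dots> \<le> - 2 * \<eta> * expected_form M x0 \<pi> ?Z"
    using expected_form_mono[where V="?Y" and V'="\<lambda>i. (- 2 * \<eta>) *\<^sub>R ?Z i", OF assms(1,2) \<pi> Y_le]
    by (simp only: expected_form_scaleR funpow_0)
  also have "\<dots> \<le> - 2 * \<eta> * (mu M x0 \<pi> * (\<Sum>i\<in>UNIV. (norm (LK p A B Q R K i))\<^sup>2))"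
    using assms(3,4,9) by (intro mult_left_mono_neg expected_form_gram_ge) auto
  finally show ?thesis .
qed

lemma expected_form_PK_gradient_dominance:
  fixes x0 :: "'a \<Rightarrow> real^'d" and \<pi> :: "'m::finite \<Rightarrow> real"
  assumes "x0 \<in> borel_measurable M" and "integrable M (\<lambda>\<omega>. (norm (x0 \<omega>))\<^sup>2)" and "\<forall>i. 0 < \<pi> i"
    and "mss p (Gam A B K)" and "mss p (Gam A B K')" and "\<forall>i j. 0 \<le> p i j"
    and "\<And>j. posdef (Q j)" and "\<And>j. posdef (R j)"
  shows "expected_form M x0 \<pi> (PK p A B Q R K) - expected_form M x0 \<pi> (PK p A B Q R K')
    \<le> max_norm (XK M x0 \<pi> p A B K') * (\<Sum>i\<in>UNIV. (norm (LK p A B Q R K i))\<^sup>2) / Lambda_min R"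
proof -
  let ?L' = "lyap_op p (Gam A B K')"
  let ?Z = "\<lambda>i. transpose (LK p A B Q R K i) ** LK p A B Q R K i"
  let ?T = "\<Sum>i\<in>UNIV. frob_inner (XK M x0 \<pi> p A B K' i) (?Z i)"
  let ?c = "- 1 / Lambda_min R"
  have "0 < Lambda_min R"
    using assms(8) by (rule Lambda_min_pos)
  have "bilin (?c *\<^sub>R ?Z i) x x \<le> bilin (lyap_residual p A B Q R K' (PK p A B Q R K) i) x x" for i x
    using lyap_residual_PK_ge[OF assms(4,6-8)] by (simp add: bilin_scaleR bilin_uminus bilin_gram)
  then have "expected_form M x0 \<pi> ((?L' ^^ t) (\<lambda>i. ?c *\<^sub>R ?Z i))
      \<le> expected_form M x0 \<pi> ((?L' ^^ t) (lyap_residual p A B Q R K' (PK p A B Q R K)))" for t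
    using assms(3)
    by (intro expected_form_mono[OF assms(1,2)] lyap_op_pow_mono assms(6)) (auto intro: less_imp_le)
  moreover have "(\<lambda>t. expected_form M x0 \<pi> ((?L' ^^ t) (\<lambda>i. ?c *\<^sub>R ?Z i))) sums (?c * ?T)"
    using sums_mult[OF expected_form_lyap_op_pow_sums_XK[OF assms(5,6)], of ?c]
    by (simp only: lyap_op_pow_scaleR expected_form_scaleR)
  ultimately have "?c * ?T \<le> expected_form M x0 \<pi> (PK p A B Q R K') - expected_form M x0 \<pi> (PK p A B Q R K)"
    by (intro sums_le[OF _ _ expected_form_PK_diff_sums[OF assms(5,6)]]) auto
  then have "expected_form M x0 \<pi> (PK p A B Q R K) - expected_form M x0 \<pi> (PK p A B Q R K')
      \<le> ?T / Lambda_min R"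
    using \<open>0 < Lambda_min R\<close> by (simp add: field_simps)
  also have "\<dots> \<le> max_norm (XK M x0 \<pi> p A B K') * (\<Sum>i\<in>UNIV. (norm (LK p A B Q R K i))\<^sup>2) / Lambda_min R"
    using \<open>0 < Lambda_min R\<close> by (intro divide_right_mono sum_frob_inner_gram_le) simp
  finally show ?thesis .
qed

text \<open>For \<open>\<xi> = 0\<close> the rate is \<open>1\<close>, since \<open>x / 0 = 0\<close>.\<close>

lemma linear_rate_of_descent_and_dominance:
  fixes c c' c_opt \<mu> \<sigma> \<xi> F \<eta> :: real
  assumes "c' - c \<le> - 2 * \<eta> * (\<mu> * F)" and "c - c_opt \<le> \<xi> * F / \<sigma>"
    and "0 \<le> \<eta>" and "0 \<le> \<mu>" and "0 < \<sigma>" and "0 \<le> \<xi>" and "0 \<le> F"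
  shows "c' - c_opt \<le> (1 - 2 * \<mu> * \<sigma> / \<xi> * \<eta>) * (c - c_opt)"
proof (cases "\<xi> = 0")
  case True
  have "0 \<le> \<eta> * (\<mu> * F)"
    using assms(3,4,7) by simp
  then show ?thesis
    using True assms(1) by simp
next
  case False
  then have "\<sigma> * (c - c_opt) / \<xi> \<le> F"
    using assms(2,5,6) by (simp add: field_simps)
  then have "2 * \<eta> * \<mu> * (\<sigma> * (c - c_opt) / \<xi>) \<le> 2 * \<eta> * \<mu> * F"
    using assms(3,4) by (intro mult_left_mono) auto
  moreover have "(1 - 2 * \<mu> * \<sigma> / \<xi> * \<eta>) * (c - c_opt) = (c - c_opt) - 2 * \<eta> * \<mu> * (\<sigma> * (c - c_opt) / \<xi>)"
    by (simp add: field_simps)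
  ultimately show ?thesis
    using assms(1) by (simp add: algebra_simps)
qed

theorem lemma9:
  fixes M :: "'a measure" and x0 :: "'a \<Rightarrow> real^'d::finite"
    and \<pi> :: "'m::finite \<Rightarrow> real" and p :: "'m \<Rightarrow> 'm \<Rightarrow> real"
    and A :: "'m \<Rightarrow> real^'d^'d" and B :: "'m \<Rightarrow> real^'k::finite^'d"
    and Q :: "'m \<Rightarrow> real^'d^'d" and R :: "'m \<Rightarrow> real^'k^'k"
    and K Kopt :: "'m \<Rightarrow> real^'d^'k" and \<eta> :: real
  assumes "prob_space M"
    and "x0 \<in> borel_measurable M"
    and "integrable M (\<lambda>\<omega>. (norm (x0 \<omega>))\<^sup>2)"
    and "posdef (second_moment M x0)"
    and "stochastic p"
    and "\<forall>i. \<pi> i > 0" and "(\<Sum>i\<in>UNIV. \<pi> i) = 1"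
    and "\<exists>K0. K0 \<in> stabK p A B"
    and "\<forall>i. posdef (Q i)" and "\<forall>i. posdef (R i)"
    and "Kopt \<in> stabK p A B"
    and "\<forall>K1\<in>stabK p A B. cost M x0 \<pi> p A B Q R Kopt \<le> cost M x0 \<pi> p A B Q R K1"
    and "K \<in> stabK p A B"
    and "0 < \<eta>"
    and "\<eta> \<le> 1 / (2 * max_norm (\<lambda>i. R i + transpose (B i) ** Eop p (PK p A B Q R K) i ** B i))"
  shows "cost M x0 \<pi> p A B Q R (\<lambda>i. K i - (2 * \<eta>) *\<^sub>R LK p A B Q R K i) - cost M x0 \<pi> p A B Q R Kopt
    \<le> ereal (1 - 2 * mu M x0 \<pi> * Lambda_min R / max_norm (XK M x0 \<pi> p A B Kopt) * \<eta>)
       * (cost M x0 \<pi> p A B Q R K - cost M x0 \<pi> p A B Q R Kopt)"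
proof -
  have p: "\<forall>i j. 0 \<le> p i j"
    using assms(5) by (simp add: stochastic_def)
  have mss: "mss p (Gam A B K)" "mss p (Gam A B Kopt)"
    using assms(11,13) by (simp_all add: stabK_def)
  have QR: "\<And>j. posdef (Q j)" "\<And>j. posdef (R j)"
    using assms(9,10) by simp_all
  let ?ev = "\<lambda>K. expected_form M x0 \<pi> (PK p A B Q R K)"
  let ?K' = "\<lambda>i. K i - (2 * \<eta>) *\<^sub>R LK p A B Q R K i"
  have "?ev ?K' - ?ev Kopt
      \<le> (1 - 2 * mu M x0 \<pi> * Lambda_min R / max_norm (XK M x0 \<pi> p A B Kopt) * \<eta>) * (?ev K - ?ev Kopt)"
    using expected_form_PK_gradient_step_le[OF assms(2-4,6) mss(1) p QR assms(14,15)]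
      expected_form_PK_gradient_dominance[OF assms(2,3,6) mss p QR]
    by (rule linear_rate_of_descent_and_dominance)
      (use assms(6,14) QR(2) in \<open>auto intro: mu_nonneg Lambda_min_pos max_norm_nonneg sum_nonneg\<close>)
  then show ?thesis
    using mss_gradient_step[OF mss(1) p QR assms(14,15)]
    by (simp add: cost_eq_expected_form[OF assms(2,3) _ p] mss)
qed

end
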